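(* Let $P$ be a polyomino whose matrix contains neither $S_1=\begin{bmatrix}1&0\\0&1\end{bmatrix}$ nor $S_2=\begin{bmatrix}0&1\\1&0\end{bmatrix}$ as a submatrix (an $L$-polyomino). Then $P$ is uniquely determined by its horizontal and vertical projections, i.e. no other binary matrix has the same vector of row sums and the same vector of column sums as the matrix of $P$.
   Context: A polyomino is a finite union of unit cells of $\mathbb{Z}\times\mathbb{Z}$ that is connected via edge adjacency, up to translation, identified with the binary matrix of its minimal bounding rectangle (entry $1$ iff the corresponding unit square is a cell). A matrix is a submatrix of another if obtained by deleting rows and/or columns. The horizontal (resp. vertical) projections of a binary matrix are the vector of its row sums (resp. column sums). *)

theory Defs
  imports Main
begin

text \<open>A binary matrix with m rows and n columns is represented by a function
  A :: nat => nat => bool together with its dimensions; only entries A i j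
  with i < m and j < n are relevant (True = entry 1 = cell).\<close>

definition cells :: "(nat \<Rightarrow> nat \<Rightarrow> bool) \<Rightarrow> nat \<Rightarrow> nat \<Rightarrow> (nat \<times> nat) set" where
  "cells A m n = {(i, j). i < m \<and> j < n \<and> A i j}"

definition edge_adj :: "nat \<times> nat \<Rightarrow> nat \<times> nat \<Rightarrow> bool" where
  "edge_adj p q \<longleftrightarrow>
     (fst p = fst q \<and> (snd p = Suc (snd q) \<or> snd q = Suc (snd p))) \<or>
     (snd p = snd q \<and> (fst p = Suc (fst q) \<or> fst q = Suc (fst p)))"

definition cells_connected :: "(nat \<times> nat) set \<Rightarrow> bool" where
  "cells_connected C \<longleftrightarrow>
     (\<forall>p\<in>C. \<forall>q\<in>C. (p, q) \<in> {(x, y). x \<in> C \<and> y \<in> C \<and> edge_adj x y}\<^sup>*)"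

text \<open>A is the matrix of a polyomino: nonempty, edge-connected set of cells,
  and the m x n rectangle is its minimal bounding rectangle (every row and
  every column contains a cell).\<close>

definition polyomino_matrix :: "(nat \<Rightarrow> nat \<Rightarrow> bool) \<Rightarrow> nat \<Rightarrow> nat \<Rightarrow> bool" where
  "polyomino_matrix A m n \<longleftrightarrow>
     0 < m \<and> 0 < n \<and>
     (\<forall>i<m. \<exists>j<n. A i j) \<and> (\<forall>j<n. \<exists>i<m. A i j) \<and>
     cells_connected (cells A m n)"

definition has_submatrix ::
  "(nat \<Rightarrow> nat \<Rightarrow> bool) \<Rightarrow> nat \<Rightarrow> nat \<Rightarrow> (nat \<Rightarrow> nat \<Rightarrow> bool) \<Rightarrow> nat \<Rightarrow> nat \<Rightarrow> bool" where
  "has_submatrix A m n S p q \<longleftrightarrow>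
     (\<exists>f g. strict_mono_on {..<p} f \<and> f ` {..<p} \<subseteq> {..<m} \<and>
            strict_mono_on {..<q} g \<and> g ` {..<q} \<subseteq> {..<n} \<and>
            (\<forall>a<p. \<forall>b<q. A (f a) (g b) = S a b))"

definition S1 :: "nat \<Rightarrow> nat \<Rightarrow> bool" where
  "S1 a b \<longleftrightarrow> a = b"

definition S2 :: "nat \<Rightarrow> nat \<Rightarrow> bool" where
  "S2 a b \<longleftrightarrow> a \<noteq> b"

definition row_sum :: "(nat \<Rightarrow> nat \<Rightarrow> bool) \<Rightarrow> nat \<Rightarrow> nat \<Rightarrow> nat" where
  "row_sum A n i = card {j. j < n \<and> A i j}"

definition col_sum :: "(nat \<Rightarrow> nat \<Rightarrow> bool) \<Rightarrow> nat \<Rightarrow> nat \<Rightarrow> nat" where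
  "col_sum A m j = card {i. i < m \<and> A i j}"

definition L_polyomino :: "(nat \<Rightarrow> nat \<Rightarrow> bool) \<Rightarrow> nat \<Rightarrow> nat \<Rightarrow> bool" where
  "L_polyomino A m n \<longleftrightarrow> polyomino_matrix A m n \<and>
     \<not> has_submatrix A m n S1 2 2 \<and> \<not> has_submatrix A m n S2 2 2"

end

theory Submission
  imports Defs
begin

text \<open>Forbidding both 2 x 2 permutation matrices means that of any two rows, the set of
  cells of one contains the set of cells of the other: the rows form a chain under
  inclusion. A matrix with nested rows is determined by its
  projections: the row with the largest support must carry every column that has a cell
  at all, and since its row sum equals the size of that support, the row is fixed;
  remove it and induct on the remaining rows.\<close>

definition row_support :: "(nat \<Rightarrow> nat \<Rightarrow> bool) \<Rightarrow> nat \<Rightarrow> nat \<Rightarrow> nat set" where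
  "row_support A n i = {j. j < n \<and> A i j}"

definition col_sum_on :: "(nat \<Rightarrow> nat \<Rightarrow> bool) \<Rightarrow> nat set \<Rightarrow> nat \<Rightarrow> nat" where
  "col_sum_on A I j = card {i \<in> I. A i j}"

lemma finite_row_support [simp]: "finite (row_support A n i)"
  by (simp add: row_support_def)

lemma row_sum_eq_card_row_support: "row_sum A n i = card (row_support A n i)"
  by (simp add: row_sum_def row_support_def)

lemma col_sum_eq_col_sum_on: "col_sum A m j = col_sum_on A {..<m} j"
  by (simp add: col_sum_def col_sum_on_def lessThan_def)

lemma col_sum_on_Diff_singleton:
  assumes "finite I" "i \<in> I"
  shows "col_sum_on A (I - {i}) j = col_sum_on A I j - (if A i j then 1 else 0)"
proof -
  have "{i' \<in> I - {i}. A i' j} = {i' \<in> I. A i' j} - {i}" by auto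
  then show ?thesis
    using assms by (simp add: col_sum_on_def card_Diff_singleton_if)
qed

lemma has_submatrix_2x2I:
  assumes "i1 < i2" "i2 < m" "j1 < j2" "j2 < n"
    and "A i1 j1 = S 0 0" "A i1 j2 = S 0 1" "A i2 j1 = S 1 0" "A i2 j2 = S 1 1"
  shows "has_submatrix A m n S 2 2"
  unfolding has_submatrix_def
proof (intro exI conjI)
  let ?f = "\<lambda>a::nat. if a = 0 then i1 else i2"
  let ?g = "\<lambda>b::nat. if b = 0 then j1 else j2"
  show "strict_mono_on {..<2} ?f" "strict_mono_on {..<2} ?g"
    using assms by (auto simp: strict_mono_on_def)
  show "?f ` {..<2} \<subseteq> {..<m}" "?g ` {..<2} \<subseteq> {..<n}"
    using assms by auto
  show "\<forall>a<2. \<forall>b<2. A (?f a) (?g b) = S a b"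
  proof (intro allI impI)
    fix a b :: nat
    assume "a < 2" "b < 2"
    then have "a = 0 \<or> a = 1" "b = 0 \<or> b = 1" by auto
    then show "A (?f a) (?g b) = S a b" using assms by auto
  qed
qed

lemma row_supports_nested:
  assumes noS1: "\<not> has_submatrix A m n S1 2 2" and noS2: "\<not> has_submatrix A m n S2 2 2"
    and "i < m" "i' < m"
  shows "row_support A n i \<subseteq> row_support A n i' \<or> row_support A n i' \<subseteq> row_support A n i"
proof (rule ccontr)
  assume "\<not> ?thesis"
  then obtain j1 j2 where j: "j1 < n" "A i j1" "\<not> A i' j1" "j2 < n" "A i' j2" "\<not> A i j2"
    by (auto simp: row_support_def)
  then have "i \<noteq> i'" "j1 \<noteq> j2" by auto
  then consider "i < i'" "j1 < j2" | "i < i'" "j2 < j1" | "i' < i" "j1 < j2" | "i' < i" "j2 < j1"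
    by linarith
  then show False
  proof cases
    case 1
    then show ?thesis using has_submatrix_2x2I[of i i' m j1 j2 n A S1] j assms noS1
      by (auto simp: S1_def)
  next
    case 2
    then show ?thesis using has_submatrix_2x2I[of i i' m j2 j1 n A S2] j assms noS2
      by (auto simp: S2_def)
  next
    case 3
    then show ?thesis using has_submatrix_2x2I[of i' i m j1 j2 n A S2] j assms noS2
      by (auto simp: S2_def)
  next
    case 4
    then show ?thesis using has_submatrix_2x2I[of i' i m j2 j1 n A S1] j assms noS1
      by (auto simp: S1_def)
  qed
qed

lemma chain_has_greatest_row_support:
  assumes "finite I" "I \<noteq> {}"
    and chain: "\<forall>i\<in>I. \<forall>i'\<in>I. row_support A n i \<subseteq> row_support A n i' \<or>
                                row_support A n i' \<subseteq> row_support A n i"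
  obtains i0 where "i0 \<in> I" "\<forall>i\<in>I. row_support A n i \<subseteq> row_support A n i0"
proof -
  obtain i0 where i0: "i0 \<in> I"
    and maximal: "\<forall>i\<in>I. row_support A n i0 \<subseteq> row_support A n i \<longrightarrow>
                           row_support A n i0 = row_support A n i"
    using finite_has_maximal[of "row_support A n ` I"] assms(1,2) by auto
  have "row_support A n i \<subseteq> row_support A n i0" if "i \<in> I" for i
    using chain i0 maximal that by blast
  with i0 show ?thesis using that by blast
qed

lemma greatest_row_determined:
  assumes "finite I" "i0 \<in> I"
    and greatest: "\<forall>i\<in>I. row_support A n i \<subseteq> row_support A n i0"
    and row: "row_sum B n i0 = row_sum A n i0"
    and cols: "\<forall>j<n. col_sum_on B I j = col_sum_on A I j"
  shows "row_support B n i0 = row_support A n i0"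
proof -
  have "row_support B n i0 \<subseteq> row_support A n i0"
  proof
    fix j
    assume j: "j \<in> row_support B n i0"
    then have "i0 \<in> {i \<in> I. B i j}" using assms(2) by (simp add: row_support_def)
    then have "col_sum_on B I j \<noteq> 0" using assms(1) by (auto simp: col_sum_on_def)
    then have "col_sum_on A I j \<noteq> 0" using cols j by (simp add: row_support_def)
    then have "{i \<in> I. A i j} \<noteq> {}" unfolding col_sum_on_def by (metis card.empty)
    then obtain i where "i \<in> I" "A i j" by blast
    then show "j \<in> row_support A n i0"
      using greatest j by (auto simp: row_support_def)
  qed
  moreover have "card (row_support B n i0) = card (row_support A n i0)"
    using row by (simp add: row_sum_eq_card_row_support)
  ultimately show ?thesis by (simp add: card_subset_eq)
qed

theorem nested_rows_determined_by_projections: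
  assumes "finite I"
    and chain: "\<forall>i\<in>I. \<forall>i'\<in>I. row_support A n i \<subseteq> row_support A n i' \<or>
                                row_support A n i' \<subseteq> row_support A n i"
    and rows: "\<forall>i\<in>I. row_sum B n i = row_sum A n i"
    and cols: "\<forall>j<n. col_sum_on B I j = col_sum_on A I j"
  shows "\<forall>i\<in>I. \<forall>j<n. B i j = A i j"
  using assms
proof (induction I rule: finite_psubset_induct)
  case (psubset I)
  show ?case
  proof (cases "I = {}")
    case False
    then obtain i0 where i0: "i0 \<in> I" "\<forall>i\<in>I. row_support A n i \<subseteq> row_support A n i0"
      using chain_has_greatest_row_support psubset.hyps psubset.prems(1) by blast
    have row_i0: "B i0 j = A i0 j" if "j < n" for j
      using greatest_row_determined[OF psubset.hyps i0] psubset.prems(2,3) i0(1) that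
      by (auto simp: row_support_def set_eq_iff)
    have "col_sum_on B (I - {i0}) j = col_sum_on A (I - {i0}) j" if "j < n" for j
      using psubset.prems(3) that row_i0[OF that]
      by (simp add: col_sum_on_Diff_singleton[OF psubset.hyps i0(1)])
    then have "\<forall>i\<in>I - {i0}. \<forall>j<n. B i j = A i j"
      using psubset.IH[of "I - {i0}"] psubset.prems(1,2) i0(1) by auto
    with row_i0 show ?thesis by auto
  qed simp
qed

theorem proposition16:
  fixes A B :: "nat \<Rightarrow> nat \<Rightarrow> bool" and m n :: nat
  assumes "L_polyomino A m n"
    and "\<forall>i<m. row_sum B n i = row_sum A n i"
    and "\<forall>j<n. col_sum B m j = col_sum A m j"
  shows "\<forall>i<m. \<forall>j<n. B i j = A i j"
proof -
  have "\<not> has_submatrix A m n S1 2 2" "\<not> has_submatrix A m n S2 2 2"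
    using assms(1) by (auto simp: L_polyomino_def)
  then have "\<forall>i\<in>{..<m}. \<forall>i'\<in>{..<m}. row_support A n i \<subseteq> row_support A n i' \<or>
                                      row_support A n i' \<subseteq> row_support A n i"
    using row_supports_nested by blast
  moreover have "\<forall>j<n. col_sum_on B {..<m} j = col_sum_on A {..<m} j"
    using assms(3) by (simp add: col_sum_eq_col_sum_on)
  ultimately show ?thesis
    using nested_rows_determined_by_projections[of "{..<m}" A n B] assms(2) by auto
qed

end
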